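(* Let $n\geq 0$ and $0\leq l\leq n$ be integers. Then, as an identity of rational functions in $q,z,x$, \[ \sum_{k=0}^{n}{n\brack k}\frac{(q/z;q)_k (zq^{-l};q)_{n-k}}{1-xq^k}z^k =\frac{(q;q)_n(xz;q)_{n-l}(zq^{-l};q)_l}{(x;q)_{n+1}}. \]
   Context: For $N\geq 0$, $(x;q)_N=(1-x)(1-xq)\cdots(1-xq^{N-1})$ (with $(x;q)_0=1$). The $q$-binomial coefficient is ${n\brack k}=\frac{(q;q)_n}{(q;q)_k(q;q)_{n-k}}$ for $0\leq k\leq n$ and $0$ otherwise. *)

theory Defs
  imports Main
begin

definition qpoch :: "'a::field \<Rightarrow> 'a \<Rightarrow> nat \<Rightarrow> 'a" where
  "qpoch x q N = (\<Prod>i<N. (1 - x * q ^ i))"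

definition qbinom :: "'a::field \<Rightarrow> nat \<Rightarrow> nat \<Rightarrow> 'a" where
  "qbinom q n k = (if k \<le> n then qpoch q q n / (qpoch q q k * qpoch q q (n - k)) else 0)"

end

theory Submission
  imports Defs "HOL-Computational_Algebra.Polynomial"
begin

text \<open>Multiplied by \<open>(x;q)\<^sub>n\<^sub>+\<^sub>1\<close>, both sides become polynomials in \<open>x\<close> of degree
  at most \<open>n\<close>: the left side is a combination of the Lagrange-type basis
  \<open>\<Prod>\<^sub>j\<^sub>\<noteq>\<^sub>k (1 - x q\<^sup>j)\<close>, the right side is a constant times \<open>(xz;q)\<^sub>n\<^sub>-\<^sub>l\<close>. It therefore
  suffices to compare them at the \<open>n + 1\<close> distinct points \<open>x = q\<^sup>-\<^sup>m\<close>, where only the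
  \<open>m\<close>-th basis polynomial survives; the resulting identity of \<open>q\<close>-Pochhammer
  symbols follows from the reflection \<open>(z - t)(1 - 1/t) = (1 - t)(1 - z/t)\<close> applied
  to \<open>t = q, \<dots>, q\<^sup>m\<close>.\<close>

lemma qpoch_add: "qpoch a q (s + t) = qpoch a q s * qpoch (a * q ^ s) q t"
  by (induction t) (simp_all add: qpoch_def power_add mult_ac)

lemma qpoch_qq_nonzero_mono:
  assumes "qpoch q q n \<noteq> 0" "m \<le> n"
  shows "qpoch q q m \<noteq> 0"
  using assms qpoch_add[of q q m "n - m"] by auto

lemma power_ne_one_if_qpoch_nonzero:
  fixes q :: "'a::field"
  assumes "qpoch q q n \<noteq> 0" "0 < a" "a \<le> n"
  shows "q ^ a \<noteq> 1"
proof
  assume "q ^ a = 1"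
  then have "1 - q * q ^ (a - 1) = 0"
    using \<open>0 < a\<close> by (cases a) auto
  then have "qpoch q q n = 0"
    unfolding qpoch_def using assms by (intro prod_zero) auto
  with assms show False by simp
qed

lemma inj_on_power_if_qpoch_nonzero:
  fixes q :: "'a::field"
  assumes "qpoch q q n \<noteq> 0" "q \<noteq> 0"
  shows "inj_on (\<lambda>j. q ^ j) {0..n}"
proof -
  have "a = b" if "a \<le> b" "b \<le> n" "q ^ a = q ^ b" for a b
  proof (rule ccontr)
    assume "a \<noteq> b"
    have "q ^ a * q ^ (b - a) = q ^ b"
      using \<open>a \<le> b\<close> by (simp flip: power_add)
    then have "q ^ (b - a) = 1"
      using \<open>q \<noteq> 0\<close> \<open>q ^ a = q ^ b\<close> by simp
    moreover have "0 < b - a" "b - a \<le> n"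
      using that \<open>a \<noteq> b\<close> by auto
    ultimately show False
      using power_ne_one_if_qpoch_nonzero[OF assms(1)] by blast
  qed
  then show ?thesis
    unfolding inj_on_def by (metis atLeastAtMost_iff nat_le_linear)
qed

lemma qpoch_div_power_swap:
  fixes q z :: "'a::field"
  assumes "q \<noteq> 0" "m \<le> n" "l \<le> n"
  shows "qpoch (z / q ^ m) q m * qpoch (z / q ^ l) q (n - m)
       = qpoch (z / q ^ m) q (n - l) * qpoch (z / q ^ l) q l"
proof -
  have swap: "qpoch (z / q ^ m) q m * qpoch (z / q ^ l) q (n - m)
       = qpoch (z / q ^ m) q (n - l) * qpoch (z / q ^ l) q l"
    if "l \<le> m" "m \<le> n" for m l :: nat
  proof -
    have shift: "z / q ^ m * q ^ (m - l) = z / q ^ l"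
      using that assms(1) by (simp add: power_diff field_simps)
    have "qpoch (z / q ^ m) q m = qpoch (z / q ^ m) q (m - l) * qpoch (z / q ^ l) q l"
      using qpoch_add[of "z / q ^ m" q "m - l" l] that shift by simp
    moreover have "qpoch (z / q ^ m) q (n - l)
        = qpoch (z / q ^ m) q (m - l) * qpoch (z / q ^ l) q (n - m)"
      using qpoch_add[of "z / q ^ m" q "m - l" "n - m"] that shift by simp
    ultimately show ?thesis by (simp add: mult_ac)
  qed
  show ?thesis
  proof (cases "l \<le> m")
    case True
    then show ?thesis using swap assms(2) by blast
  next
    case False
    then have "m \<le> l" by simp
    then show ?thesis using swap[OF _ assms(3)] by (simp add: mult_ac)
  qed
qed

lemma qpoch_reversed:
  fixes q z :: "'a::field"
  shows "qpoch z q m = (\<Prod>i<m. 1 - z * q ^ (m - Suc i))"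
  unfolding qpoch_def by (rule prod.nat_diff_reindex[symmetric])

lemma qpoch_reflection:
  fixes q z :: "'a::field"
  assumes "q \<noteq> 0" "z \<noteq> 0"
  shows "z ^ m * qpoch (q / z) q m * (\<Prod>j<m. 1 - q ^ j / q ^ m)
       = qpoch q q m * qpoch (z / q ^ m) q m"
proof -
  have inverse_power: "q ^ (m - Suc i) / q ^ m = 1 / q ^ Suc i" if "i < m" for i
    using that assms by (simp add: power_diff)
  have ratios: "(\<Prod>j<m. 1 - q ^ j / q ^ m) = (\<Prod>i<m. 1 - 1 / q ^ Suc i)"
    by (subst prod.nat_diff_reindex[symmetric]) (simp add: inverse_power)
  have shifted: "qpoch (z / q ^ m) q m = (\<Prod>i<m. 1 - z / q ^ Suc i)"
    unfolding qpoch_reversed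
  proof (rule prod.cong)
    fix i assume "i \<in> {..<m}"
    have "z / q ^ m * q ^ (m - Suc i) = z * (q ^ (m - Suc i) / q ^ m)"
      by simp
    also have "\<dots> = z / q ^ Suc i"
      using \<open>i \<in> {..<m}\<close> by (subst inverse_power) simp_all
    finally show "1 - z / q ^ m * q ^ (m - Suc i) = 1 - z / q ^ Suc i"
      by simp
  qed simp
  have "z ^ m * qpoch (q / z) q m = (\<Prod>i<m. z * (1 - q / z * q ^ i))"
    unfolding qpoch_def by (simp add: prod.distrib)
  also have "\<dots> = (\<Prod>i<m. z - q ^ Suc i)"
    using assms by (intro prod.cong) (simp_all add: field_simps)
  finally have scaled: "z ^ m * qpoch (q / z) q m = (\<Prod>i<m. z - q ^ Suc i)" .
  have termwise: "(z - t) * (1 - 1 / t) = (1 - t) * (1 - z / t)" if "t \<noteq> 0" for t :: 'a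
    using that by (simp add: field_simps)
  have "z ^ m * qpoch (q / z) q m * (\<Prod>j<m. 1 - q ^ j / q ^ m)
      = (\<Prod>i<m. (z - q ^ Suc i) * (1 - 1 / q ^ Suc i))"
    by (simp only: scaled ratios prod.distrib)
  also have "\<dots> = (\<Prod>i<m. (1 - q ^ Suc i) * (1 - z / q ^ Suc i))"
    using assms by (intro prod.cong refl termwise) simp
  also have "\<dots> = qpoch q q m * qpoch (z / q ^ m) q m"
    unfolding shifted unfolding qpoch_def by (simp only: prod.distrib power_Suc)
  finally show ?thesis .
qed

lemma prod_one_minus_power_ratio_split:
  fixes q :: "'a::field"
  assumes "q \<noteq> 0" "m \<le> n"
  shows "(\<Prod>j\<in>{0..n} - {m}. 1 - q ^ j / q ^ m)
       = (\<Prod>j<m. 1 - q ^ j / q ^ m) * qpoch q q (n - m)"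
proof -
  have "{0..n} - {m} = {..<m} \<union> {Suc m..n}"
    using assms by auto
  then have "(\<Prod>j\<in>{0..n} - {m}. 1 - q ^ j / q ^ m) = (\<Prod>j\<in>{..<m} \<union> {Suc m..n}. 1 - q ^ j / q ^ m)"
    by (rule arg_cong)
  also have "\<dots> = (\<Prod>j<m. 1 - q ^ j / q ^ m) * (\<Prod>j\<in>{Suc m..n}. 1 - q ^ j / q ^ m)"
    by (rule prod.union_disjoint) auto
  also have "{Suc m..n} = {0 + Suc m..<(n - m) + Suc m}"
    using assms by auto
  also have "(\<Prod>j\<in>\<dots>. 1 - q ^ j / q ^ m) = (\<Prod>i<n - m. 1 - q ^ (i + Suc m) / q ^ m)"
    by (simp only: prod.shift_bounds_nat_ivl atLeast0LessThan)
  also have "\<dots> = qpoch q q (n - m)"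
    unfolding qpoch_def using assms(1) by (intro prod.cong) (simp_all add: power_add)
  finally show ?thesis .
qed

text \<open>The value at \<open>x = q\<^sup>-\<^sup>m\<close> of the \<open>m\<close>-th term of the left side times \<open>(x;q)\<^sub>n\<^sub>+\<^sub>1\<close>.\<close>
lemma qbinom_term_residue:
  fixes q z :: "'a::field"
  assumes "q \<noteq> 0" "z \<noteq> 0" "m \<le> n" "l \<le> n" "qpoch q q n \<noteq> 0"
  shows "qbinom q n m * (qpoch (q / z) q m * qpoch (z / q ^ l) q (n - m)) * z ^ m
          * (\<Prod>j\<in>{0..n} - {m}. 1 - q ^ j / q ^ m)
       = qpoch q q n * qpoch (z / q ^ m) q (n - l) * qpoch (z / q ^ l) q l"
proof -
  \<comment> \<open>kept opaque so that \<open>field_simps\<close> does not rewrite inside the product\<close>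
  define P where "P = (\<Prod>j<m. 1 - q ^ j / q ^ m)"
  have "qpoch q q m \<noteq> 0" "qpoch q q (n - m) \<noteq> 0"
    using qpoch_qq_nonzero_mono[OF assms(5)] assms(3) by auto
  then have "qbinom q n m * (qpoch (q / z) q m * qpoch (z / q ^ l) q (n - m)) * z ^ m
          * (\<Prod>j\<in>{0..n} - {m}. 1 - q ^ j / q ^ m)
      = qpoch q q n * qpoch (z / q ^ l) q (n - m) / qpoch q q m
          * (z ^ m * qpoch (q / z) q m * P)"
    unfolding qbinom_def prod_one_minus_power_ratio_split[OF assms(1,3)] P_def[symmetric]
    using assms(3) by (simp add: field_simps)
  also have "\<dots> = qpoch q q n * (qpoch (z / q ^ m) q m * qpoch (z / q ^ l) q (n - m))"
    using \<open>qpoch q q m \<noteq> 0\<close> assms by (simp add: P_def qpoch_reflection)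
  also have "\<dots> = qpoch q q n * qpoch (z / q ^ m) q (n - l) * qpoch (z / q ^ l) q l"
    using qpoch_div_power_swap[OF assms(1,3,4)] by simp
  finally show ?thesis .
qed

lemma degree_prod_linear_le:
  fixes c :: "'b \<Rightarrow> 'a::field"
  assumes "finite S"
  shows "degree (\<Prod>i\<in>S. [:1, c i:]) \<le> card S"
proof -
  have "degree (\<Prod>i\<in>S. [:1, c i:]) \<le> (\<Sum>i\<in>S. degree [:1, c i:])"
    using degree_prod_sum_le[OF assms, of "\<lambda>i. [:1, c i:]"] by (simp only: comp_def)
  also have "\<dots> \<le> (\<Sum>i\<in>S. 1)"
    by (intro sum_mono) auto
  finally show ?thesis by simp
qed

text \<open>Lagrange interpolation at the points \<open>1/a\<^sub>k\<close>, with the basis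
  \<open>\<Prod>\<^sub>j\<^sub>\<noteq>\<^sub>k (1 - x a\<^sub>j)\<close> in place of \<open>\<Prod>\<^sub>j\<^sub>\<noteq>\<^sub>k (x - x\<^sub>j)\<close>.\<close>
lemma interpolation_prod_one_minus:
  fixes a c :: "nat \<Rightarrow> 'a::field" and p :: "'a poly"
  assumes inj: "inj_on a {0..n}" and nonzero: "\<And>k. k \<le> n \<Longrightarrow> a k \<noteq> 0"
    and deg: "degree p \<le> n"
    and residues: "\<And>k. k \<le> n \<Longrightarrow> c k * (\<Prod>j\<in>{0..n} - {k}. 1 - a j / a k) = poly p (1 / a k)"
  shows "poly p x = (\<Sum>k=0..n. c k * (\<Prod>j\<in>{0..n} - {k}. 1 - x * a j))"
proof -
  define L where "L = (\<Sum>k=0..n. smult (c k) (\<Prod>j\<in>{0..n} - {k}. [:1, - a j:]))"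
  have poly_L: "poly L y = (\<Sum>k=0..n. c k * (\<Prod>j\<in>{0..n} - {k}. 1 - y * a j))" for y
    unfolding L_def by (simp add: poly_sum poly_prod)
  have "degree L \<le> n"
    unfolding L_def
  proof (rule degree_sum_le)
    fix k assume "k \<in> {0..n}"
    have "degree (smult (c k) (\<Prod>j\<in>{0..n} - {k}. [:1, - a j:]))
        \<le> degree (\<Prod>j\<in>{0..n} - {k}. [:1, - a j:])"
      by (rule degree_smult_le)
    also have "\<dots> \<le> card ({0..n} - {k})"
      by (rule degree_prod_linear_le) simp
    also have "\<dots> \<le> n"
      using \<open>k \<in> {0..n}\<close> by simp
    finally show "degree (smult (c k) (\<Prod>j\<in>{0..n} - {k}. [:1, - a j:])) \<le> n" .
  qed simp
  have "poly L (1 / a m) = poly p (1 / a m)" if "m \<le> n" for m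
  proof -
    have vanish: "(\<Prod>j\<in>{0..n} - {k}. 1 - a j / a m) = 0" if "k \<in> {0..n} - {m}" for k
    proof (rule prod_zero)
      show "\<exists>j\<in>{0..n} - {k}. 1 - a j / a m = 0"
        using that \<open>m \<le> n\<close> nonzero[OF \<open>m \<le> n\<close>] by (intro bexI[of _ m]) auto
    qed simp
    have "poly L (1 / a m) = c m * (\<Prod>j\<in>{0..n} - {m}. 1 - a j / a m)"
      unfolding poly_L using \<open>m \<le> n\<close> by (simp add: sum.remove sum.neutral vanish)
    then show ?thesis
      using residues[OF \<open>m \<le> n\<close>] by simp
  qed
  moreover have "card ((\<lambda>k. 1 / a k) ` {0..n}) = Suc n"
  proof -
    have "inj_on (\<lambda>k. 1 / a k) {0..n}"
      using inj by (simp add: inj_on_def)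
    then show ?thesis
      by (simp add: card_image)
  qed
  ultimately have "L = p"
    using \<open>degree L \<le> n\<close> deg
    by (intro poly_eqI_degree[where A = "(\<lambda>k. 1 / a k) ` {0..n}"]) auto
  then show ?thesis
    using poly_L by simp
qed

lemma prod_remove_divide_qpoch_Suc:
  assumes "k \<le> n" "qpoch x q (Suc n) \<noteq> 0"
  shows "(\<Prod>j\<in>{0..n} - {k}. 1 - x * q ^ j) / qpoch x q (Suc n) = 1 / (1 - x * q ^ k)"
proof -
  have "qpoch x q (Suc n) = (1 - x * q ^ k) * (\<Prod>j\<in>{0..n} - {k}. 1 - x * q ^ j)"
    using assms(1) unfolding qpoch_def
    by (simp add: atLeast0AtMost lessThan_Suc_atMost prod.remove)
  with assms(2) show ?thesis
    by simp
qed

theorem lemma2p1: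
  fixes q z x :: "'a::field" and n l :: nat
  assumes "l \<le> n" and "q \<noteq> 0" and "z \<noteq> 0"
    and "qpoch q q n \<noteq> 0" and "qpoch x q (Suc n) \<noteq> 0"
  shows "(\<Sum>k=0..n. qbinom q n k * (qpoch (q / z) q k * qpoch (z / q ^ l) q (n - k))
            / (1 - x * q ^ k) * z ^ k)
         = qpoch q q n * qpoch (x * z) q (n - l) * qpoch (z / q ^ l) q l / qpoch x q (Suc n)"
proof -
  define c where "c k = qbinom q n k * (qpoch (q / z) q k * qpoch (z / q ^ l) q (n - k)) * z ^ k" for k
  define p where "p = smult (qpoch q q n * qpoch (z / q ^ l) q l) (\<Prod>i<n - l. [:1, - (z * q ^ i):])"
  have poly_p: "poly p y = qpoch q q n * qpoch (y * z) q (n - l) * qpoch (z / q ^ l) q l" for y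
    unfolding p_def qpoch_def by (simp add: poly_prod mult_ac)
  have deg_p: "degree p \<le> n"
    unfolding p_def
    by (rule order_trans[OF degree_smult_le order_trans[OF degree_prod_linear_le]]) simp_all
  have residues_p: "c k * (\<Prod>j\<in>{0..n} - {k}. 1 - q ^ j / q ^ k) = poly p (1 / q ^ k)"
    if "k \<le> n" for k
  proof -
    have "1 / q ^ k * z = z / q ^ k"
      by simp
    then show ?thesis
      unfolding c_def poly_p by (simp only: qbinom_term_residue[OF assms(2,3) that assms(1,4)])
  qed
  have expansion: "poly p x = (\<Sum>k=0..n. c k * (\<Prod>j\<in>{0..n} - {k}. 1 - x * q ^ j))"
    by (rule interpolation_prod_one_minus[OF inj_on_power_if_qpoch_nonzero[OF assms(4,2)] _
          deg_p residues_p]) (use assms(2) in simp)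
  have termwise: "qbinom q n k * (qpoch (q / z) q k * qpoch (z / q ^ l) q (n - k))
        / (1 - x * q ^ k) * z ^ k
      = c k * (\<Prod>j\<in>{0..n} - {k}. 1 - x * q ^ j) / qpoch x q (Suc n)"
    if "k \<in> {0..n}" for k
    using prod_remove_divide_qpoch_Suc[of k n x q] that assms(5)
    by (simp only: c_def times_divide_eq_right[symmetric]) simp
  have "(\<Sum>k=0..n. qbinom q n k * (qpoch (q / z) q k * qpoch (z / q ^ l) q (n - k))
            / (1 - x * q ^ k) * z ^ k)
      = (\<Sum>k=0..n. c k * (\<Prod>j\<in>{0..n} - {k}. 1 - x * q ^ j)) / qpoch x q (Suc n)"
    unfolding sum_divide_distrib by (rule sum.cong[OF refl termwise])
  then show ?thesis
    by (simp only: expansion[symmetric] poly_p)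
qed

end
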